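(* Let $(S,K,I)$ be a split graph. If $\Phi(S)$ is disconnected, then $S$ is decomposable.
   Context: All graphs are finite and simple. A split graph is a graph $S$ whose vertex set is a disjoint union $V(S)=K\,\dot\cup\,I$ with $K$ a clique and $I$ an independent set; $(K,I)$ is called a bipartition of $S$, and $(S,K,I)$ denotes $S$ together with this fixed bipartition. For a split graph $(S,K,I)$ and distinct $u,v\in I$, $\sigma_{uv}(S)$ is the number of induced subgraphs of $S$ isomorphic to $P_4$ containing both $u$ and $v$. The factor graph $\Phi(S)$ is the loopless multigraph with vertex set $I$ having exactly $\sigma_{uv}(S)$ parallel edges between $u$ and $v$. Graph notions (connected, complete, clique, etc.) applied to $\Phi(S)$ refer to its underlying simple graph, in which $u\sim v$ iff $\sigma_{uv}(S)\ge1$. Tyshkevich composition: for a split graph $(S,K,I)$ and a graph $G$ vertex-disjoint from $S$, $S\circ G$ is the graph with vertex set $V(S)\cup V(G)$ and edge set $E(S)\cup E(G)\cup\{xy: x\in K,\ y\in V(G)\}$. A graph $G$ is decomposable if $G=S\circ H$ for some split graph $S$ and graph $H$, each with at least one vertex; otherwise $G$ is indecomposable. *)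

theory Defs
  imports Main
begin

definition graph :: "'a set \<Rightarrow> ('a \<Rightarrow> 'a \<Rightarrow> bool) \<Rightarrow> bool" where
  "graph V E \<longleftrightarrow> finite V \<and> (\<forall>x y. E x y \<longrightarrow> x \<in> V \<and> y \<in> V \<and> x \<noteq> y \<and> E y x)"

definition clique_in :: "('a \<Rightarrow> 'a \<Rightarrow> bool) \<Rightarrow> 'a set \<Rightarrow> bool" where
  "clique_in E K \<longleftrightarrow> (\<forall>x\<in>K. \<forall>y\<in>K. x \<noteq> y \<longrightarrow> E x y)"

definition independent_in :: "('a \<Rightarrow> 'a \<Rightarrow> bool) \<Rightarrow> 'a set \<Rightarrow> bool" where
  "independent_in E I \<longleftrightarrow> (\<forall>x\<in>I. \<forall>y\<in>I. \<not> E x y)"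

definition split_graph :: "'a set \<Rightarrow> ('a \<Rightarrow> 'a \<Rightarrow> bool) \<Rightarrow> 'a set \<Rightarrow> 'a set \<Rightarrow> bool" where
  "split_graph V E K I \<longleftrightarrow> graph V E \<and> V = K \<union> I \<and> K \<inter> I = {} \<and>
     clique_in E K \<and> independent_in E I"

definition induced_P4 :: "'a set \<Rightarrow> ('a \<Rightarrow> 'a \<Rightarrow> bool) \<Rightarrow> 'a set \<Rightarrow> bool" where
  "induced_P4 V E X \<longleftrightarrow> X \<subseteq> V \<and> (\<exists>a b c d. X = {a, b, c, d} \<and> distinct [a, b, c, d] \<and>
      E a b \<and> E b c \<and> E c d \<and> \<not> E a c \<and> \<not> E a d \<and> \<not> E b d)"

definition sigma :: "'a set \<Rightarrow> ('a \<Rightarrow> 'a \<Rightarrow> bool) \<Rightarrow> 'a \<Rightarrow> 'a \<Rightarrow> nat" where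
  "sigma V E u v = card {X. induced_P4 V E X \<and> u \<in> X \<and> v \<in> X}"

text \<open>Underlying simple graph of the factor graph Phi(S), on vertex set I.\<close>
definition factor_adj :: "'a set \<Rightarrow> ('a \<Rightarrow> 'a \<Rightarrow> bool) \<Rightarrow> 'a set \<Rightarrow> 'a \<Rightarrow> 'a \<Rightarrow> bool" where
  "factor_adj V E I u v \<longleftrightarrow> u \<in> I \<and> v \<in> I \<and> u \<noteq> v \<and> sigma V E u v \<ge> 1"

definition factor_disconnected :: "'a set \<Rightarrow> ('a \<Rightarrow> 'a \<Rightarrow> bool) \<Rightarrow> 'a set \<Rightarrow> bool" where
  "factor_disconnected V E I \<longleftrightarrow> (\<exists>u\<in>I. \<exists>v\<in>I. \<not> (factor_adj V E I)\<^sup>*\<^sup>* u v)"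

text \<open>Edge relation of the Tyshkevich composition S \<circ> G (S = (VS,ES) with clique part K).\<close>
definition tcomp_edges :: "('a \<Rightarrow> 'a \<Rightarrow> bool) \<Rightarrow> 'a set \<Rightarrow> 'a set \<Rightarrow> ('a \<Rightarrow> 'a \<Rightarrow> bool) \<Rightarrow> 'a \<Rightarrow> 'a \<Rightarrow> bool" where
  "tcomp_edges ES K VG EG x y \<longleftrightarrow>
     ES x y \<or> EG x y \<or> (x \<in> K \<and> y \<in> VG) \<or> (y \<in> K \<and> x \<in> VG)"

definition decomposable :: "'a set \<Rightarrow> ('a \<Rightarrow> 'a \<Rightarrow> bool) \<Rightarrow> bool" where
  "decomposable V E \<longleftrightarrow> (\<exists>VS ES K I VH EH.
      split_graph VS ES K I \<and> graph VH EH \<and> VS \<noteq> {} \<and> VH \<noteq> {} \<and> VS \<inter> VH = {} \<and>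
      V = VS \<union> VH \<and> E = tcomp_edges ES K VH EH)"

end

theory Submission
  imports Defs
begin

text \<open>Write N(x) for the neighbourhood of x \<in> I inside K. If N(a) and N(b) are incomparable,
  pick c \<in> N(a) - N(b) and d \<in> N(b) - N(a): then a c d b is an induced P4, so a and b are
  adjacent in \<Phi>(S). Hence the incomparability graph of N on I is disconnected as well. A vertex
  outside the component C of some u has a neighbourhood comparable with every neighbourhood
  in C, and walking along incomparable steps inside C shows that it lies either below all of
  them or above all of them. This produces a proper nonempty J \<subseteq> I with N(x) \<subseteq> N(y) for
  x \<in> J, y \<in> I - J, and S splits off the split graph induced by J and the union of the N(x),
  x \<in> J.\<close>

lemma le_all_or_ge_all_on_incomparability_component:
  fixes f :: "'a \<Rightarrow> 'b::preorder"
  assumes incomparable: "\<And>a b. R a b \<Longrightarrow> \<not> f a \<le> f b \<and> \<not> f b \<le> f a"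
    and comparable: "\<And>w. R\<^sup>*\<^sup>* u w \<Longrightarrow> f x \<le> f w \<or> f w \<le> f x"
  shows "(\<forall>w. R\<^sup>*\<^sup>* u w \<longrightarrow> f x \<le> f w) \<or> (\<forall>w. R\<^sup>*\<^sup>* u w \<longrightarrow> f w \<le> f x)"
proof -
  have le_iff: "f x \<le> f w \<longleftrightarrow> f x \<le> f u" if "R\<^sup>*\<^sup>* u w" for w
    using that
  proof (induction rule: rtranclp_induct)
    case (step y z)
    have "f x \<le> f z \<longleftrightarrow> f x \<le> f y"
      using comparable[OF step(1)] comparable[OF rtranclp.rtrancl_into_rtrancl[OF step(1,2)]]
        incomparable[OF step(2)] order_trans by blast
    with step.IH show ?case by simp
  qed simp
  show ?thesis
    using le_iff comparable by blast
qed

lemma lower_set_if_incomparability_disconnected: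
  fixes I :: "'a set" and f :: "'a \<Rightarrow> 'b::preorder"
  defines "R \<equiv> \<lambda>a b. a \<in> I \<and> b \<in> I \<and> \<not> f a \<le> f b \<and> \<not> f b \<le> f a"
  assumes "u \<in> I" "v \<in> I" "\<not> R\<^sup>*\<^sup>* u v"
  shows "\<exists>J\<subseteq>I. J \<noteq> {} \<and> J \<noteq> I \<and> (\<forall>x\<in>J. \<forall>y\<in>I - J. f x \<le> f y)"
proof -
  define C where "C = {w. R\<^sup>*\<^sup>* u w}"
  have "u \<in> C" "v \<notin> C"
    using assms(4) by (simp_all add: C_def)
  have "C \<subseteq> I"
  proof
    fix w assume "w \<in> C"
    then have "R\<^sup>*\<^sup>* u w" by (simp add: C_def)
    then show "w \<in> I" by (induction rule: rtranclp_induct) (auto simp: R_def \<open>u \<in> I\<close>)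
  qed
  have dichotomy: "(\<forall>w\<in>C. f x \<le> f w) \<or> (\<forall>w\<in>C. f w \<le> f x)" if "x \<in> I - C" for x
  proof -
    have "f x \<le> f w \<or> f w \<le> f x" if "R\<^sup>*\<^sup>* u w" for w
    proof (rule ccontr)
      assume "\<not> (f x \<le> f w \<or> f w \<le> f x)"
      with \<open>R\<^sup>*\<^sup>* u w\<close> \<open>C \<subseteq> I\<close> \<open>x \<in> I - C\<close> have "R\<^sup>*\<^sup>* u x"
        by (auto simp: C_def R_def intro: rtranclp.rtrancl_into_rtrancl)
      with \<open>x \<in> I - C\<close> show False by (simp add: C_def)
    qed
    then show ?thesis
      using le_all_or_ge_all_on_incomparability_component[of R f u x] by (auto simp: C_def R_def)
  qed
  define B where "B = {x\<in>I - C. \<not> (\<forall>w\<in>C. f w \<le> f x)}"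
  show ?thesis
  proof (cases "B = {}")
    case True
    then have "\<forall>x\<in>C. \<forall>y\<in>I - C. f x \<le> f y" by (auto simp: B_def)
    with \<open>C \<subseteq> I\<close> \<open>u \<in> C\<close> \<open>v \<notin> C\<close> \<open>v \<in> I\<close> show ?thesis by blast
  next
    case False
    have "f x \<le> f y" if "x \<in> B" "y \<in> I - B" for x y
    proof (cases "y \<in> C")
      case True
      with that dichotomy show ?thesis by (auto simp: B_def)
    next
      case False
      with that dichotomy \<open>u \<in> C\<close> have "f x \<le> f u" "f u \<le> f y" by (auto simp: B_def)
      then show ?thesis by (rule order_trans)
    qed
    moreover have "B \<subseteq> I" "u \<in> I - B"
      using \<open>u \<in> C\<close> \<open>u \<in> I\<close> by (auto simp: B_def)
    ultimately show ?thesis using False by blast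
  qed
qed

definition nbhd_in :: "('a \<Rightarrow> 'a \<Rightarrow> bool) \<Rightarrow> 'a set \<Rightarrow> 'a \<Rightarrow> 'a set" where
  "nbhd_in E K x = {k \<in> K. E x k}"

lemma split_graph_edgeD:
  assumes "split_graph V E K I" "E x y"
  shows "E y x" and "x \<in> V" and "x \<noteq> y"
  using assms by (auto simp: split_graph_def graph_def)

lemma split_graph_edge_from_independent:
  assumes "split_graph V E K I" "x \<in> I" "E x y"
  shows "y \<in> K"
  using assms unfolding split_graph_def graph_def independent_in_def by blast

lemma decomposableI:
  assumes "split_graph VS ES K I" "graph VH EH" "E = tcomp_edges ES K VH EH"
    and "VS \<noteq> {}" "VH \<noteq> {}" "VS \<inter> VH = {}" "V = VS \<union> VH"
  shows "decomposable V E"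
  unfolding decomposable_def using assms by blast

lemma decomposable_if_split_part:
  assumes S: "split_graph V E K I" and "K' \<subseteq> K" "I' \<subseteq> I"
    and closed: "\<And>x k. x \<in> I' \<Longrightarrow> E x k \<Longrightarrow> k \<in> K'"
    and joined: "\<And>y k. y \<in> I - I' \<Longrightarrow> k \<in> K' \<Longrightarrow> E y k"
    and "K' \<union> I' \<noteq> {}" "V - (K' \<union> I') \<noteq> {}"
  shows "decomposable V E"
proof -
  define VS where "VS = K' \<union> I'"
  define VH where "VH = V - VS"
  define ES where "ES = (\<lambda>x y. E x y \<and> x \<in> VS \<and> y \<in> VS)"
  define EH where "EH = (\<lambda>x y. E x y \<and> x \<in> VH \<and> y \<in> VH)"
  have "V = K \<union> I" "K \<inter> I = {}" "finite V" "clique_in E K" "independent_in E I"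
    using S by (auto simp: split_graph_def graph_def)
  have "finite VS"
    using \<open>finite V\<close> \<open>K' \<subseteq> K\<close> \<open>I' \<subseteq> I\<close> \<open>V = K \<union> I\<close>
    unfolding VS_def by (meson Un_mono finite_subset)
  moreover have "clique_in ES K'" "independent_in ES I'"
    using \<open>clique_in E K\<close> \<open>independent_in E I\<close> \<open>K' \<subseteq> K\<close> \<open>I' \<subseteq> I\<close>
    unfolding clique_in_def independent_in_def ES_def VS_def by blast+
  ultimately have "split_graph VS ES K' I'"
    using S \<open>K \<inter> I = {}\<close> \<open>K' \<subseteq> K\<close> \<open>I' \<subseteq> I\<close>
    unfolding split_graph_def graph_def ES_def VS_def by blast
  moreover have "graph VH EH"
    using S \<open>finite V\<close> by (auto simp: split_graph_def graph_def EH_def VH_def)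
  moreover have "E = tcomp_edges ES K' VH EH"
  proof (intro ext iffI)
    fix x y
    assume "E x y"
    then show "tcomp_edges ES K' VH EH x y"
      using split_graph_edgeD[OF S] closed
      by (auto simp: tcomp_edges_def ES_def EH_def VH_def VS_def)
  next
    fix x y
    have "E k y" if "k \<in> K'" "y \<in> VH" for k y
    proof (cases "y \<in> K")
      case True
      with that \<open>K' \<subseteq> K\<close> \<open>clique_in E K\<close> show ?thesis
        by (auto simp: clique_in_def VH_def VS_def)
    next
      case False
      with that \<open>V = K \<union> I\<close> have "E y k" by (intro joined) (auto simp: VH_def VS_def)
      then show ?thesis by (rule split_graph_edgeD[OF S])
    qed
    moreover assume "tcomp_edges ES K' VH EH x y"
    ultimately show "E x y"
      using split_graph_edgeD[OF S] by (auto simp: tcomp_edges_def ES_def EH_def)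
  qed
  moreover have "VS \<noteq> {}" "VH \<noteq> {}" "VS \<inter> VH = {}" "V = VS \<union> VH"
    using assms(6,7) \<open>K' \<subseteq> K\<close> \<open>I' \<subseteq> I\<close> \<open>V = K \<union> I\<close> by (auto simp: VH_def VS_def)
  ultimately show ?thesis
    by (intro decomposableI[of VS ES K' I' VH EH])
qed

lemma decomposable_if_nested_nbhds:
  assumes S: "split_graph V E K I" and "J \<subseteq> I" "J \<noteq> {}" "J \<noteq> I"
    and nested: "\<And>x y. x \<in> J \<Longrightarrow> y \<in> I - J \<Longrightarrow> nbhd_in E K x \<subseteq> nbhd_in E K y"
  shows "decomposable V E"
proof (rule decomposable_if_split_part[OF S _ \<open>J \<subseteq> I\<close>])
  show "\<Union> (nbhd_in E K ` J) \<subseteq> K"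
    by (auto simp: nbhd_in_def)
  show "k \<in> \<Union> (nbhd_in E K ` J)" if "x \<in> J" "E x k" for x k
    using that \<open>J \<subseteq> I\<close> split_graph_edge_from_independent[OF S] by (auto simp: nbhd_in_def)
  show "E y k" if "y \<in> I - J" "k \<in> \<Union> (nbhd_in E K ` J)" for y k
    using that nested by (auto simp: nbhd_in_def)
  show "\<Union> (nbhd_in E K ` J) \<union> J \<noteq> {}"
    using \<open>J \<noteq> {}\<close> by blast
  obtain y where "y \<in> I - J"
    using \<open>J \<subseteq> I\<close> \<open>J \<noteq> I\<close> by blast
  with S show "V - (\<Union> (nbhd_in E K ` J) \<union> J) \<noteq> {}"
    by (auto simp: split_graph_def nbhd_in_def)
qed

lemma factor_adj_if_incomparable_nbhds:
  assumes S: "split_graph V E K I" and "a \<in> I" "b \<in> I"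
    and "\<not> nbhd_in E K a \<subseteq> nbhd_in E K b" "\<not> nbhd_in E K b \<subseteq> nbhd_in E K a"
  shows "factor_adj V E I a b"
proof -
  obtain c d where c: "c \<in> K" "E a c" "\<not> E b c" and d: "d \<in> K" "E b d" "\<not> E a d"
    using assms(4,5) by (auto simp: nbhd_in_def)
  have "V = K \<union> I" "K \<inter> I = {}" "finite V" "clique_in E K" "independent_in E I"
    using S by (auto simp: split_graph_def graph_def)
  have "a \<noteq> b" "c \<noteq> d"
    using c d by auto
  have "induced_P4 V E {a, c, d, b}"
    unfolding induced_P4_def
  proof (intro conjI exI)
    show "{a, c, d, b} \<subseteq> V"
      using \<open>V = K \<union> I\<close> \<open>a \<in> I\<close> \<open>b \<in> I\<close> c d by blast
    show "distinct [a, c, d, b]"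
      using \<open>K \<inter> I = {}\<close> \<open>a \<in> I\<close> \<open>b \<in> I\<close> \<open>a \<noteq> b\<close> \<open>c \<noteq> d\<close> c d by auto
    show "E c d"
      using \<open>clique_in E K\<close> \<open>c \<noteq> d\<close> c d by (simp add: clique_in_def)
    show "\<not> E a b"
      using \<open>independent_in E I\<close> \<open>a \<in> I\<close> \<open>b \<in> I\<close> by (simp add: independent_in_def)
    show "\<not> E c b" "E d b"
      using c d split_graph_edgeD[OF S] by blast+
  qed (use c d in simp_all)
  moreover have "finite {X. induced_P4 V E X \<and> a \<in> X \<and> b \<in> X}"
    by (rule finite_subset[of _ "Pow V"]) (auto simp: induced_P4_def \<open>finite V\<close>)
  ultimately have "sigma V E a b \<ge> 1"
    unfolding sigma_def by (auto simp: Suc_le_eq card_gt_0_iff)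
  with \<open>a \<in> I\<close> \<open>b \<in> I\<close> \<open>a \<noteq> b\<close> show ?thesis
    by (simp add: factor_adj_def)
qed

theorem corollary2p5:
  fixes V K I :: "'a set" and E :: "'a \<Rightarrow> 'a \<Rightarrow> bool"
  assumes "split_graph V E K I"
    and "factor_disconnected V E I"
  shows "decomposable V E"
proof -
  obtain u v where "u \<in> I" "v \<in> I" and "\<not> (factor_adj V E I)\<^sup>*\<^sup>* u v"
    using assms(2) unfolding factor_disconnected_def by blast
  let ?incomparable = "\<lambda>a b. a \<in> I \<and> b \<in> I \<and>
    \<not> nbhd_in E K a \<subseteq> nbhd_in E K b \<and> \<not> nbhd_in E K b \<subseteq> nbhd_in E K a"
  have "?incomparable\<^sup>*\<^sup>* \<le> (factor_adj V E I)\<^sup>*\<^sup>*"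
    by (rule rtranclp_mono) (use factor_adj_if_incomparable_nbhds[OF assms(1)] in blast)
  with \<open>\<not> (factor_adj V E I)\<^sup>*\<^sup>* u v\<close> have "\<not> ?incomparable\<^sup>*\<^sup>* u v"
    by blast
  with \<open>u \<in> I\<close> \<open>v \<in> I\<close>
  have "\<exists>J\<subseteq>I. J \<noteq> {} \<and> J \<noteq> I \<and> (\<forall>x\<in>J. \<forall>y\<in>I - J. nbhd_in E K x \<subseteq> nbhd_in E K y)"
    by (rule lower_set_if_incomparability_disconnected)
  then show ?thesis
    using decomposable_if_nested_nbhds[OF assms(1)] by blast
qed

end
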